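(* Let $G=(V,E)$ be a graph with vertex weights $w: V \to \mathbb{Z}^+$. There exists a set $S \subseteq V$ attaining the minimum in $\mathrm{wvi}(G) = \min_{S \subseteq V} \{ w(S) + \max_{D} w(D) \}$ (maximum over connected components $D$ of $G-S$) such that for every connected component $D$ of $G - S$ and every module $M$ of $G$, one of the following holds: (i) $M \cap D = \emptyset$, (ii) $M \subseteq D$, or (iii) $D \subseteq M$.
   Context: Graphs are finite, simple and undirected; for $X \subseteq V$, $w(X) = \sum_{x \in X} w(x)$, and connected components are identified with their vertex sets. A module of $G$ is a set $M \subseteq V$ such that every vertex $x \in V \setminus M$ is adjacent either to all vertices of $M$ or to none of them. *)

theory Defs
  imports Main
begin

definition simple_graph :: "'a set \<Rightarrow> ('a \<Rightarrow> 'a \<Rightarrow> bool) \<Rightarrow> bool" where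
  "simple_graph V E \<longleftrightarrow> finite V \<and> (\<forall>x y. E x y \<longrightarrow> E y x)
     \<and> (\<forall>x. \<not> E x x) \<and> (\<forall>x y. E x y \<longrightarrow> x \<in> V \<and> y \<in> V)"

definition components :: "('a \<Rightarrow> 'a \<Rightarrow> bool) \<Rightarrow> 'a set \<Rightarrow> 'a set set" where
  "components E U = {C. \<exists>x\<in>U. C = {y. (\<lambda>a b. E a b \<and> a \<in> U \<and> b \<in> U)\<^sup>*\<^sup>* x y}}"

definition is_module :: "'a set \<Rightarrow> ('a \<Rightarrow> 'a \<Rightarrow> bool) \<Rightarrow> 'a set \<Rightarrow> bool" where
  "is_module V E M \<longleftrightarrow> M \<subseteq> V \<and>
     (\<forall>x\<in>V - M. (\<forall>y\<in>M. E x y) \<or> (\<forall>y\<in>M. \<not> E x y))"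

text \<open>w(S) + max_D w(D) over components D of G - S (the max over no components is 0).\<close>
definition wvi_cost :: "'a set \<Rightarrow> ('a \<Rightarrow> 'a \<Rightarrow> bool) \<Rightarrow> ('a \<Rightarrow> nat) \<Rightarrow> 'a set \<Rightarrow> nat" where
  "wvi_cost V E w S = sum w S + Max (insert 0 ((\<lambda>D. sum w D) ` components E (V - S)))"

definition wvi :: "'a set \<Rightarrow> ('a \<Rightarrow> 'a \<Rightarrow> bool) \<Rightarrow> ('a \<Rightarrow> nat) \<Rightarrow> nat" where
  "wvi V E w = Min (wvi_cost V E w ` Pow V)"

end

theory Submission
  imports Defs
begin

text \<open>Take an optimal separator S with as few vertices as possible. Suppose a component D
of G - S and a module M cross, i.e. M meets D but neither contains the other. An edge of D
leaving M ends in a vertex of D adjacent to all of M, so M - D lies in S; and every neighbour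
of M - D outside S is adjacent to M \<inter> D, hence lies in D. Putting M - D back into the graph
therefore only enlarges D by M - D: the largest component grows by at most w(M - D) while
w(S) drops by exactly that much. So S - (M - D) is optimal too, and it is smaller than S.\<close>

abbreviation induced_adj :: "('a \<Rightarrow> 'a \<Rightarrow> bool) \<Rightarrow> 'a set \<Rightarrow> 'a \<Rightarrow> 'a \<Rightarrow> bool" where
  "induced_adj E U \<equiv> \<lambda>a b. E a b \<and> a \<in> U \<and> b \<in> U"

lemma simple_graph_symp: "simple_graph V E \<Longrightarrow> symp E"
  unfolding simple_graph_def symp_def by blast

lemma rtranclp_crossing_step:
  assumes "R\<^sup>*\<^sup>* x y" "P x" "\<not> P y"
  shows "\<exists>u v. R\<^sup>*\<^sup>* x u \<and> R u v \<and> P u \<and> \<not> P v"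
  using assms by (induction rule: rtranclp_induct) (blast, metis)

lemma induced_adj_rtranclp_mem:
  "(induced_adj E U)\<^sup>*\<^sup>* x y \<Longrightarrow> x \<in> U \<Longrightarrow> y \<in> U"
  by (induction rule: rtranclp_induct) auto

lemma induced_adj_rtranclp_closed:
  assumes "(induced_adj E W)\<^sup>*\<^sup>* x y" "x \<in> A" "A \<subseteq> W"
    and closed: "\<And>y z. y \<in> A \<Longrightarrow> z \<in> W \<Longrightarrow> E y z \<Longrightarrow> z \<in> A"
  shows "(induced_adj E A)\<^sup>*\<^sup>* x y"
  using assms(1)
proof (induction rule: rtranclp_induct)
  case (step y z)
  then have "y \<in> A" using induced_adj_rtranclp_mem assms(2) by fast
  with step closed have "induced_adj E A y z" by blast
  with step.IH show ?case by (rule rtranclp.rtrancl_into_rtrancl)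
qed simp

lemma component_subset: "C \<in> components E U \<Longrightarrow> C \<subseteq> U"
  unfolding components_def using induced_adj_rtranclp_mem by fast

lemma finite_components: "finite U \<Longrightarrow> finite (components E U)"
  by (rule finite_subset[of _ "Pow U"]) (use component_subset in auto)

lemma component_closed:
  assumes "C \<in> components E U" "y \<in> C" "z \<in> U" "E y z"
  shows "z \<in> C"
proof -
  obtain x where C: "C = {y. (induced_adj E U)\<^sup>*\<^sup>* x y}"
    using assms(1) unfolding components_def by blast
  have "y \<in> U" using assms(1,2) component_subset by blast
  with assms C show ?thesis by (auto intro: rtranclp.rtrancl_into_rtrancl)
qed

lemma component_eq_reach:
  assumes "symp E" "C \<in> components E U" "x \<in> C"
  shows "C = {y. (induced_adj E U)\<^sup>*\<^sup>* x y}"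
proof -
  obtain a where C: "C = {y. (induced_adj E U)\<^sup>*\<^sup>* a y}"
    using assms(2) unfolding components_def by blast
  have "symp (induced_adj E U)"
    using assms(1) unfolding symp_def by blast
  then have "(induced_adj E U)\<^sup>*\<^sup>* x a"
    using assms(3) C symp_rtranclp by (fastforce dest: sympD)
  with C assms(3) show ?thesis by auto
qed

lemma component_of_union_cases:
  assumes "symp E" "D \<in> components E U"
    and nbr: "\<And>x y. x \<in> X \<Longrightarrow> y \<in> U \<Longrightarrow> E x y \<Longrightarrow> y \<in> D"
    and "C \<in> components E (U \<union> X)"
  shows "C \<subseteq> X \<union> D \<or> (\<exists>C'\<in>components E U. C \<subseteq> C')"
proof -
  obtain x where x: "x \<in> U \<union> X" and C: "C = {y. (induced_adj E (U \<union> X))\<^sup>*\<^sup>* x y}"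
    using assms(4) unfolding components_def by blast
  have DU: "D \<subseteq> U" using assms(2) by (rule component_subset)
  show ?thesis
  proof (cases "x \<in> X \<union> D")
    case True
    have closed: "z \<in> X \<union> D" if "y \<in> X \<union> D" "z \<in> U \<union> X" "E y z" for y z
      using that nbr component_closed[OF assms(2)] by blast
    have "y \<in> X \<union> D" if "y \<in> C" for y
    proof (rule induced_adj_rtranclp_mem)
      show "(induced_adj E (X \<union> D))\<^sup>*\<^sup>* x y"
        using induced_adj_rtranclp_closed[of E "U \<union> X" x y "X \<union> D"] that C True DU closed
        by blast
    qed (fact True)
    then show ?thesis by blast
  next
    case False
    have closed: "z \<in> U - D" if "y \<in> U - D" "z \<in> U \<union> X" "E y z" for y z
    proof -
      have "E z y" using assms(1) \<open>E y z\<close> by (rule sympD)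
      then show ?thesis
        using that nbr[of z y] component_closed[OF assms(2), of z y] by blast
    qed
    have "(induced_adj E U)\<^sup>*\<^sup>* x y" if "y \<in> C" for y
    proof (rule rtranclp_mono[THEN predicate2D])
      show "(induced_adj E (U - D))\<^sup>*\<^sup>* x y"
        using induced_adj_rtranclp_closed[of E "U \<union> X" x y "U - D"] that C False x closed
        by blast
    qed blast
    moreover have "{y. (induced_adj E U)\<^sup>*\<^sup>* x y} \<in> components E U"
      using False x unfolding components_def by blast
    ultimately show ?thesis by blast
  qed
qed

lemma wvi_cost_diff_le:
  assumes "simple_graph V E" "X \<subseteq> S" "S \<subseteq> V" "D \<in> components E (V - S)"
    and nbr: "\<And>x y. x \<in> X \<Longrightarrow> y \<in> V - S \<Longrightarrow> E x y \<Longrightarrow> y \<in> D"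
  shows "wvi_cost V E w (S - X) \<le> wvi_cost V E w S"
proof -
  have fin: "finite V" using assms(1) unfolding simple_graph_def by blast
  have fin_sub: "finite A" if "A \<subseteq> V" for A
    using finite_subset[OF that fin] .
  define mx where "mx = Max (insert 0 (sum w ` components E (V - S)))"
  have le_mx: "sum w C \<le> mx" if "C \<in> components E (V - S)" for C
    unfolding mx_def using that fin_sub[of "V - S"]
    by (intro Max_ge) (auto intro: finite_components)
  have "X \<subseteq> V" "D \<subseteq> V" using assms(2,3) component_subset[OF assms(4)] by auto
  then have X_D: "finite X" "finite D" using fin_sub by auto
  have "sum w C \<le> mx + sum w X" if C: "C \<in> components E (V - S \<union> X)" for C
    using component_of_union_cases[OF simple_graph_symp[OF assms(1)] assms(4) nbr C]
  proof
    assume "C \<subseteq> X \<union> D"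
    then have "sum w C \<le> sum w (X \<union> D)"
      using X_D by (intro sum_mono2) auto
    also have "\<dots> \<le> sum w X + sum w D"
      using sum.union_inter[OF X_D, of w] by linarith
    finally show ?thesis using le_mx[OF assms(4)] by linarith
  next
    assume "\<exists>C'\<in>components E (V - S). C \<subseteq> C'"
    then obtain C' where C': "C' \<in> components E (V - S)" "C \<subseteq> C'" by blast
    have "finite C'" using component_subset[OF C'(1)] fin_sub by blast
    then have "sum w C \<le> sum w C'" using C'(2) by (intro sum_mono2) auto
    then show ?thesis using le_mx[OF C'(1)] by linarith
  qed
  moreover have "V - (S - X) = V - S \<union> X" using assms(2,3) by blast
  moreover have "finite (components E (V - S \<union> X))"
    using assms(2,3) fin_sub by (intro finite_components) auto
  ultimately have "Max (insert 0 (sum w ` components E (V - (S - X)))) \<le> mx + sum w X"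
    by (intro Max.boundedI) auto
  moreover have "sum w S = sum w (S - X) + sum w X"
    using sum.subset_diff[OF assms(2)] assms(3) fin_sub by blast
  ultimately show ?thesis unfolding wvi_cost_def mx_def by linarith
qed

lemma is_module_adj:
  "is_module V E M \<Longrightarrow> x \<in> V - M \<Longrightarrow> y \<in> M \<Longrightarrow> z \<in> M \<Longrightarrow> E x y \<Longrightarrow> E x z"
  unfolding is_module_def by blast

lemma module_crossing_component:
  assumes "simple_graph V E" "D \<in> components E (V - S)" "is_module V E M"
    and "M \<inter> D \<noteq> {}" "\<not> D \<subseteq> M"
  shows "M \<inter> (V - S) \<subseteq> D"
    and "\<And>x y. x \<in> M - D \<Longrightarrow> y \<in> V - S \<Longrightarrow> E x y \<Longrightarrow> y \<in> D"
proof -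
  have sym: "symp E" using assms(1) by (rule simple_graph_symp)
  obtain m d where m: "m \<in> M" "m \<in> D" and d: "d \<in> D" "d \<notin> M"
    using assms(4,5) by blast
  have "(induced_adj E (V - S))\<^sup>*\<^sup>* m d"
    using component_eq_reach[OF sym assms(2) m(2)] d(1) by blast
  then obtain a b where ma: "(induced_adj E (V - S))\<^sup>*\<^sup>* m a"
    and ab: "induced_adj E (V - S) a b" "a \<in> M" "b \<notin> M"
    using rtranclp_crossing_step[where P = "\<lambda>u. u \<in> M"] m(1) d(2) by blast
  have aD: "a \<in> D" using ma component_eq_reach[OF sym assms(2) m(2)] by blast
  have bD: "b \<in> D" using component_closed[OF assms(2) aD] ab(1) by blast
  have b_adj: "E b z" if "z \<in> M" for z
  proof (rule is_module_adj[OF assms(3) _ ab(2) that])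
    show "b \<in> V - M" using ab(1,3) by blast
    show "E b a" using sym ab(1) by (blast dest: sympD)
  qed
  show M_in_D: "M \<inter> (V - S) \<subseteq> D"
    using b_adj component_closed[OF assms(2) bD] by blast
  show "y \<in> D" if "x \<in> M - D" "y \<in> V - S" "E x y" for x y
  proof (cases "y \<in> M")
    case False
    then have "E y a"
      using that is_module_adj[OF assms(3) _ _ ab(2)] sym by (blast dest: sympD)
    then show ?thesis
      using component_closed[OF assms(2) aD that(2)] sym by (blast dest: sympD)
  qed (use M_in_D that in blast)
qed

lemma wvi_le_wvi_cost: "finite V \<Longrightarrow> S \<subseteq> V \<Longrightarrow> wvi V E w \<le> wvi_cost V E w S"
  unfolding wvi_def by (rule Min_le) auto

lemma wvi_attained:
  assumes "finite V"
  shows "\<exists>S\<subseteq>V. wvi_cost V E w S = wvi V E w"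
proof -
  have "wvi V E w \<in> wvi_cost V E w ` Pow V"
    unfolding wvi_def using assms by (intro Min_in) auto
  then show ?thesis by auto
qed

theorem lemma11:
  fixes V :: "'a set" and E :: "'a \<Rightarrow> 'a \<Rightarrow> bool" and w :: "'a \<Rightarrow> nat"
  assumes "simple_graph V E"
    and "\<forall>v\<in>V. w v > 0"
  shows "\<exists>S. S \<subseteq> V \<and> wvi_cost V E w S = wvi V E w \<and>
           (\<forall>D\<in>components E (V - S). \<forall>M. is_module V E M \<longrightarrow>
              M \<inter> D = {} \<or> M \<subseteq> D \<or> D \<subseteq> M)"
proof -
  let ?opt = "\<lambda>S. S \<subseteq> V \<and> wvi_cost V E w S = wvi V E w"
  have fin: "finite V" using assms(1) unfolding simple_graph_def by blast
  obtain S0 where "?opt S0" using wvi_attained[OF fin] by blast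
  \<comment> \<open>Minimising |S| among optimal sets is what makes the positivity of w unnecessary.\<close>
  then obtain S where S: "?opt S" and S_least: "\<And>T. ?opt T \<Longrightarrow> card S \<le> card T"
    using ex_has_least_nat[of ?opt S0 card] by blast
  have "M \<inter> D = {} \<or> M \<subseteq> D \<or> D \<subseteq> M"
    if D: "D \<in> components E (V - S)" and M: "is_module V E M" for D M
  proof (rule ccontr)
    assume "\<not> ?thesis"
    then have cross: "M \<inter> D \<noteq> {}" "\<not> M \<subseteq> D" "\<not> D \<subseteq> M" by auto
    note M_D = module_crossing_component[OF assms(1) D M cross(1,3)]
    have "M \<subseteq> V" using M unfolding is_module_def by blast
    then have X: "M - D \<subseteq> S" "M - D \<noteq> {}" using M_D(1) cross(2) by auto
    have "wvi_cost V E w (S - (M - D)) \<le> wvi_cost V E w S"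
      using S by (intro wvi_cost_diff_le[OF assms(1) X(1) _ D M_D(2)]) auto
    then have "wvi_cost V E w (S - (M - D)) \<le> wvi V E w" using S by simp
    moreover have "wvi V E w \<le> wvi_cost V E w (S - (M - D))"
      using S by (intro wvi_le_wvi_cost[OF fin]) auto
    ultimately have "card S \<le> card (S - (M - D))"
      using S S_least[of "S - (M - D)"] by auto
    moreover have "card (S - (M - D)) < card S"
      using X S fin by (intro psubset_card_mono) (auto intro: finite_subset)
    ultimately show False by linarith
  qed
  with S show ?thesis by blast
qed

end
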